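(* Let $X, Y, Z, W$ be vector fields on $M$. Then $$\tau\big(\Phi(Z), \nabla^{E'}_Y\Phi'(W)\big) = -\tfrac{1}{2}D_M[Z|YW],\qquad \tau\big(\Phi(Z), \nabla^{E'}_X\nabla^{E'}_Y\Phi'(W)\big) = -\tfrac{1}{2}D_M[Z|XYW].$$
   Context: Let $\mathbb{R}^{2n+1}$ have coordinates $(\mathbf{x},\mathbf{p},z)$ and contact form $\theta=dz-\sum_ip_i\,dx_i$. A quasi-Hessian manifold $M$ is obtained by gluing Legendre submanifolds $L\subset\mathbb{R}^{2n+1}$ (local models) via affine Legendre equivalences. On each local model, $\pi^e:(\mathbf{x},\mathbf{p},z)\mapsto(\mathbf{x},z)$ and $\pi^m:(\mathbf{x},\mathbf{p},z)\mapsto(\mathbf{p},z')$ with $z'=\mathbf{p}^T\mathbf{x}-z$; $E=\{(q,w):dz(w)-\mathbf{p}(q)^Td\mathbf{x}(w)=0\}\subset L\times(\mathbb{R}^n_{\mathbf{x}}\times\mathbb{R}_z)$ with $\Phi=d\pi^e:TL\to E$ and flat connection $\nabla^E$ (flat frame $s_i=\partial/\partial x_i+p_i\,\partial/\partial z$), and analogously $E'$ with $\Phi'=d\pi^m$ and flat connection $\nabla^{E'}$ (flat frame $s_i^*=\partial/\partial p_i+x_i\,\partial/\partial z'$); these glue to bundles on $M$. $\tau=\sum_i dx_i\,dp_i$ (symmetrized), $\tau(s_i,s_j^* )=\tfrac12\delta_{ij}$, and $\tau(\eta,\zeta')$ means $\tau(\eta\oplus0,0\oplus\zeta')$. The canonical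 divergence on a local model is $D(p,q)=z(p)+z'(q)-\mathbf{x}(p)^T\mathbf{p}(q)$; it is invariant under affine Legendre equivalences and defines $D_M:M\times M\to\mathbb{R}$ (locally). For a function $\rho$ on $M\times M$, $\rho[X_1\cdots X_k|Y_1\cdots Y_l](r)=(X_1)_p\cdots(X_k)_p(Y_1)_q\cdots(Y_l)_q\,\rho(p,q)\big|_{p=q=r}$. *)

theory Defs
  imports "HOL-Analysis.Analysis"
begin

text \<open>Local model of a quasi-Hessian manifold: a Legendre submanifold L of
  R^(2n+1), given by a parametrisation u |-> (X u, P u, Zc u) over an open set U of R^n.
  Functions and vector fields on L are identified with functions and vector fields on U.\<close>

fun Ck :: "nat \<Rightarrow> ('a::real_normed_vector) set \<Rightarrow> ('a \<Rightarrow> 'b::real_normed_vector) \<Rightarrow> bool" where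
  "Ck 0 S f = continuous_on S f"
| "Ck (Suc k) S f = (continuous_on S f \<and> f differentiable_on S \<and>
      (\<forall>v. Ck k S (\<lambda>u. frechet_derivative f (at u) v)))"

definition smooth_on :: "('a::real_normed_vector) set \<Rightarrow> ('a \<Rightarrow> 'b::real_normed_vector) \<Rightarrow> bool" where
  "smooth_on S f \<longleftrightarrow> (\<forall>k. Ck k S f)"

definition vfd :: "('a::real_normed_vector \<Rightarrow> 'a) \<Rightarrow> ('a \<Rightarrow> 'b::real_normed_vector) \<Rightarrow> 'a \<Rightarrow> 'b" where
  "vfd V g u = frechet_derivative g (at u) (V u)"

text \<open>Legendre submanifold given by an injective smooth immersion with theta = dz - p dx pulling back to 0.\<close>
definition legendre_param ::
  "(real^'n) set \<Rightarrow> (real^'n \<Rightarrow> real^'n) \<Rightarrow> (real^'n \<Rightarrow> real^'n) \<Rightarrow> (real^'n \<Rightarrow> real) \<Rightarrow> bool" where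
  "legendre_param U X P Zc \<longleftrightarrow> open U \<and> U \<noteq> {} \<and>
     smooth_on U X \<and> smooth_on U P \<and> smooth_on U Zc \<and>
     inj_on (\<lambda>u. (X u, P u, Zc u)) U \<and>
     (\<forall>u\<in>U. inj (frechet_derivative (\<lambda>u. (X u, P u, Zc u)) (at u))) \<and>
     (\<forall>u\<in>U. \<forall>h. frechet_derivative Zc (at u) h = P u \<bullet> frechet_derivative X (at u) h)"

definition zdual :: "(real^'n \<Rightarrow> real^'n) \<Rightarrow> (real^'n \<Rightarrow> real^'n) \<Rightarrow> (real^'n \<Rightarrow> real) \<Rightarrow> real^'n \<Rightarrow> real" where
  "zdual X P Zc u = P u \<bullet> X u - Zc u"

text \<open>Phi = d pi^e : TL -> E, values in R^n_x x R_z.\<close>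
definition Phi :: "(real^'n \<Rightarrow> real^'n) \<Rightarrow> (real^'n \<Rightarrow> real) \<Rightarrow> (real^'n \<Rightarrow> real^'n) \<Rightarrow> real^'n \<Rightarrow> (real^'n) \<times> real" where
  "Phi X Zc V u = (vfd V X u, vfd V Zc u)"

text \<open>Phi' = d pi^m : TL -> E', values in R^n_p x R_z'.\<close>
definition Phi' :: "(real^'n \<Rightarrow> real^'n) \<Rightarrow> (real^'n \<Rightarrow> real^'n) \<Rightarrow> (real^'n \<Rightarrow> real) \<Rightarrow> (real^'n \<Rightarrow> real^'n) \<Rightarrow> real^'n \<Rightarrow> (real^'n) \<times> real" where
  "Phi' X P Zc V u = (vfd V P u, vfd V (zdual X P Zc) u)"

text \<open>Flat frame of E': s_i^* = d/dp_i + x_i d/dz'.\<close>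
definition frameE' :: "(real^'n \<Rightarrow> real^'n) \<Rightarrow> 'n \<Rightarrow> real^'n \<Rightarrow> (real^'n) \<times> real" where
  "frameE' X i u = (axis i 1, X u $ i)"

text \<open>Flat connection of E': nabla_Y (sum_i c_i s_i^*) = sum_i Y(c_i) s_i^*, where c_i is
  the p_i-component of the section.\<close>
definition nablaE' :: "(real^'n \<Rightarrow> real^'n) \<Rightarrow> (real^'n \<Rightarrow> real^'n) \<Rightarrow> (real^'n \<Rightarrow> (real^'n) \<times> real) \<Rightarrow> real^'n \<Rightarrow> (real^'n) \<times> real" where
  "nablaE' X Y \<sigma> u = (\<Sum>i\<in>UNIV. vfd Y (\<lambda>v. fst (\<sigma> v) $ i) u *\<^sub>R frameE' X i u)"

text \<open>tau = sum_i dx_i dp_i (symmetrised) on E (+) E'.\<close>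
definition tau :: "((real^'n) \<times> real) \<times> ((real^'n) \<times> real) \<Rightarrow> ((real^'n) \<times> real) \<times> ((real^'n) \<times> real) \<Rightarrow> real" where
  "tau a b = (1/2) * (\<Sum>i\<in>UNIV. fst (fst a) $ i * fst (snd b) $ i + fst (fst b) $ i * fst (snd a) $ i)"

definition Dcan :: "(real^'n \<Rightarrow> real^'n) \<Rightarrow> (real^'n \<Rightarrow> real^'n) \<Rightarrow> (real^'n \<Rightarrow> real) \<Rightarrow> (real^'n) \<times> (real^'n) \<Rightarrow> real" where
  "Dcan X P Zc pq = Zc (fst pq) + zdual X P Zc (snd pq) - X (fst pq) \<bullet> P (snd pq)"

definition vf1 :: "('a::real_normed_vector \<Rightarrow> 'a) \<Rightarrow> ('a \<times> 'a \<Rightarrow> real) \<Rightarrow> 'a \<times> 'a \<Rightarrow> real" where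
  "vf1 V g pq = frechet_derivative (\<lambda>p. g (p, snd pq)) (at (fst pq)) (V (fst pq))"

definition vf2 :: "('a::real_normed_vector \<Rightarrow> 'a) \<Rightarrow> ('a \<times> 'a \<Rightarrow> real) \<Rightarrow> 'a \<times> 'a \<Rightarrow> real" where
  "vf2 V g pq = frechet_derivative (\<lambda>q. g (fst pq, q)) (at (snd pq)) (V (snd pq))"

end

(*
  In a local model, D(p,q) = z(p) + z'(q) - x(p)\<bullet>p(q). Differentiating in q along W, Y (and X)
  kills z(p) and keeps the shape A(q) - x(p)\<bullet>B(q), where B is the iterated derivative YWp
  (resp. XYWp) of the momentum coordinates. Since the flat frame s_i^* has p-component e_i, the
  p-component of \<nabla>^{E'}_Y \<Phi>'(W) (resp. \<nabla>^{E'}_X \<nabla>^{E'}_Y \<Phi>'(W)) is that same B. A final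
  derivative in p along Z gives -dx(Z)\<bullet>B, while \<tau>(\<Phi>(Z), \<sigma>) = dx(Z)\<bullet>(p-component of \<sigma>)/2.
*)
theory Submission
  imports Defs
begin

lemma Ck_transform_within_open:
  assumes "open S" "\<And>x. x \<in> S \<Longrightarrow> f x = g x" "Ck k S f"
  shows "Ck k S g"
  using assms(2,3)
proof (induction k arbitrary: f g)
  case 0
  then show ?case using continuous_on_eq by auto
next
  case (Suc k)
  have f_diff: "f differentiable at u" if "u \<in> S" for u
    using Suc.prems(2) that differentiable_on_eq_differentiable_at[OF assms(1)] by auto
  have g_deriv: "(g has_derivative frechet_derivative f (at u)) (at u)" if "u \<in> S" for u
    using has_derivative_transform_within_open[OF _ assms(1) that] f_diff[OF that] Suc.prems(1)
    by (metis frechet_derivative_works)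
  then have "g differentiable_on S"
    using differentiable_on_eq_differentiable_at[OF assms(1)] differentiableI by blast
  moreover have "continuous_on S g"
    using Suc.prems continuous_on_eq by auto
  moreover have "Ck k S (\<lambda>u. frechet_derivative g (at u) v)" for v
  proof (rule Suc.IH)
    show "frechet_derivative f (at u) v = frechet_derivative g (at u) v" if "u \<in> S" for u
      using frechet_derivative_at[OF g_deriv[OF that]] by simp
  qed (use Suc.prems(2) in auto)
  ultimately show ?case by simp
qed

lemma Ck_SucI:
  assumes "open S" "continuous_on S f"
    and "\<And>u. u \<in> S \<Longrightarrow> (f has_derivative D u) (at u)"
    and "\<And>v. Ck k S (\<lambda>u. D u v)"
  shows "Ck (Suc k) S f"
proof -
  have "f differentiable_on S"
    using assms(1,3) differentiable_on_eq_differentiable_at differentiableI by blast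
  moreover have "Ck k S (\<lambda>u. frechet_derivative f (at u) v)" for v
    by (rule Ck_transform_within_open[OF assms(1) _ assms(4)[of v]])
      (metis assms(3) frechet_derivative_at)
  ultimately show ?thesis using assms(2) by simp
qed

lemma Ck_SucD: "Ck (Suc k) S f \<Longrightarrow> Ck k S f"
proof (induction k arbitrary: f)
  case (Suc k)
  then show ?case by (metis Ck.simps(2))
qed simp

lemma Ck_const:
  fixes c :: "'b::real_normed_vector"
  assumes "open S"
  shows "Ck k S (\<lambda>x::'a::real_normed_vector. c)"
  by (induction k arbitrary: c) (auto intro: Ck_SucI[OF assms])

lemma Ck_add:
  assumes "open S"
  shows "Ck k S f \<Longrightarrow> Ck k S g \<Longrightarrow> Ck k S (\<lambda>x. f x + g x)"
proof (induction k arbitrary: f g)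
  case 0
  then show ?case by (simp add: continuous_on_add)
next
  case (Suc k)
  then have "f differentiable at u" "g differentiable at u" if "u \<in> S" for u
    using that differentiable_on_eq_differentiable_at[OF assms] by auto
  with Suc show ?case
    by (intro Ck_SucI[OF assms,
          where D = "\<lambda>u h. frechet_derivative f (at u) h + frechet_derivative g (at u) h"])
      (auto intro!: continuous_on_add has_derivative_add simp: frechet_derivative_works)
qed

lemma Ck_linear:
  assumes "open S" "bounded_linear L"
  shows "Ck k S f \<Longrightarrow> Ck k S (\<lambda>x. L (f x))"
proof (induction k arbitrary: f)
  case 0
  then show ?case by (simp add: bounded_linear.continuous_on[OF assms(2)])
next
  case (Suc k)
  then have "f differentiable at u" if "u \<in> S" for u
    using that differentiable_on_eq_differentiable_at[OF assms(1)] by auto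
  with Suc show ?case
    by (intro Ck_SucI[OF assms(1), where D = "\<lambda>u h. L (frechet_derivative f (at u) h)"])
      (auto intro!: bounded_linear.continuous_on[OF assms(2)]
        bounded_linear.has_derivative[OF assms(2)] simp: frechet_derivative_works)
qed

lemma Ck_bilinear:
  fixes f :: "'a::real_normed_vector \<Rightarrow> 'b::real_normed_vector"
    and g :: "'a \<Rightarrow> 'c::real_normed_vector"
    and prod :: "'b \<Rightarrow> 'c \<Rightarrow> 'd::real_normed_vector"
  assumes "open S" "bounded_bilinear prod"
  shows "Ck k S f \<Longrightarrow> Ck k S g \<Longrightarrow> Ck k S (\<lambda>x. prod (f x) (g x))"
proof (induction k arbitrary: f g)
  case 0
  then show ?case by (simp add: bounded_bilinear.continuous_on[OF assms(2)])
next
  case (Suc k)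
  then have "f differentiable at u" "g differentiable at u" if "u \<in> S" for u
    using that differentiable_on_eq_differentiable_at[OF assms(1)] by auto
  moreover have "Ck k S (\<lambda>u. prod (f u) (frechet_derivative g (at u) v)
      + prod (frechet_derivative f (at u) v) (g u))" for v
  proof -
    have "Ck k S f" "Ck k S g"
      using Suc.prems Ck_SucD by blast+
    moreover have "Ck k S (\<lambda>u. frechet_derivative f (at u) v)"
      and "Ck k S (\<lambda>u. frechet_derivative g (at u) v)"
      using Suc.prems by simp_all
    ultimately show ?thesis
      by (intro Ck_add[OF assms(1)] Suc.IH)
  qed
  ultimately show ?case
    using Suc.prems bounded_bilinear.continuous_on[OF assms(2)]
    by (intro Ck_SucI[OF assms(1),
          where D = "\<lambda>u h. prod (f u) (frechet_derivative g (at u) h)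
            + prod (frechet_derivative f (at u) h) (g u)"])
      (auto intro!: bounded_bilinear.FDERIV[OF assms(2)] simp: frechet_derivative_works)
qed

lemma smooth_on_transform_within_open:
  assumes "open S" "\<And>x. x \<in> S \<Longrightarrow> f x = g x" "smooth_on S f"
  shows "smooth_on S g"
  using assms(3) Ck_transform_within_open[OF assms(1,2)] unfolding smooth_on_def by simp

lemma smooth_on_const:
  fixes c :: "'b::real_normed_vector"
  assumes "open S"
  shows "smooth_on S (\<lambda>x::'a::real_normed_vector. c)"
  unfolding smooth_on_def by (simp add: Ck_const[OF assms])

lemma smooth_on_add:
  assumes "open S" "smooth_on S f" "smooth_on S g"
  shows "smooth_on S (\<lambda>x. f x + g x)"
  using assms unfolding smooth_on_def by (simp add: Ck_add)

lemma smooth_on_linear: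
  assumes "open S" "bounded_linear L" "smooth_on S f"
  shows "smooth_on S (\<lambda>x. L (f x))"
  unfolding smooth_on_def
proof
  fix k
  show "Ck k S (\<lambda>x. L (f x))"
    by (rule Ck_linear[OF assms(1,2)]) (use assms(3) in \<open>simp add: smooth_on_def\<close>)
qed

lemma smooth_on_bilinear:
  fixes f :: "'a::real_normed_vector \<Rightarrow> 'b::real_normed_vector"
    and g :: "'a \<Rightarrow> 'c::real_normed_vector"
    and prod :: "'b \<Rightarrow> 'c \<Rightarrow> 'd::real_normed_vector"
  assumes "open S" "bounded_bilinear prod" "smooth_on S f" "smooth_on S g"
  shows "smooth_on S (\<lambda>x. prod (f x) (g x))"
  unfolding smooth_on_def
proof
  fix k
  show "Ck k S (\<lambda>x. prod (f x) (g x))"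
    by (rule Ck_bilinear[OF assms(1,2)])
      (use assms(3,4) in \<open>simp_all add: smooth_on_def\<close>)
qed

lemma smooth_on_diff:
  assumes "open S" "smooth_on S f" "smooth_on S g"
  shows "smooth_on S (\<lambda>x. f x - g x)"
proof -
  have "smooth_on S (\<lambda>x. - g x)"
    using smooth_on_linear[OF assms(1) bounded_linear_minus[OF bounded_linear_ident] assms(3)]
    by simp
  from smooth_on_add[OF assms(1,2) this] show ?thesis by simp
qed

lemma smooth_on_sum:
  assumes "open S" "finite I" "\<And>i. i \<in> I \<Longrightarrow> smooth_on S (f i)"
  shows "smooth_on S (\<lambda>x. \<Sum>i\<in>I. f i x)"
  using assms(2,3)
  by (induction I rule: finite_induct) (simp_all add: smooth_on_const smooth_on_add assms(1))

lemma smooth_on_differentiable: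
  assumes "open S" "smooth_on S f" "x \<in> S"
  shows "f differentiable at x"
proof -
  have "Ck (Suc 0) S f"
    using assms(2) unfolding smooth_on_def by blast
  then show ?thesis
    using assms(1,3) differentiable_on_eq_differentiable_at by auto
qed

lemma smooth_on_partial_derivative:
  assumes "smooth_on S f"
  shows "smooth_on S (\<lambda>u. frechet_derivative f (at u) v)"
  unfolding smooth_on_def
proof
  fix k
  have "Ck (Suc k) S f"
    using assms unfolding smooth_on_def by blast
  then show "Ck k S (\<lambda>u. frechet_derivative f (at u) v)" by simp
qed

lemma linear_expand_axis:
  fixes L :: "real^'n \<Rightarrow> 'b::real_vector"
  assumes "linear L"
  shows "L h = (\<Sum>j\<in>UNIV. h $ j *\<^sub>R L (axis j 1))"
proof -
  have "L h = L (\<Sum>j\<in>UNIV. h $ j *\<^sub>R axis j 1)"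
    using basis_expansion[of h] by (simp add: scalar_mult_eq_scaleR)
  also have "\<dots> = (\<Sum>j\<in>UNIV. h $ j *\<^sub>R L (axis j 1))"
    by (simp add: linear_sum[OF assms] linear_scale[OF assms])
  finally show ?thesis .
qed

lemma smooth_on_vfd:
  fixes V :: "real^'n \<Rightarrow> real^'n" and f :: "real^'n \<Rightarrow> 'b::real_normed_vector"
  assumes "open S" "smooth_on S V" "smooth_on S f"
  shows "smooth_on S (vfd V f)"
proof (rule smooth_on_transform_within_open[OF assms(1)])
  show "smooth_on S (\<lambda>u. \<Sum>j\<in>UNIV. V u $ j *\<^sub>R frechet_derivative f (at u) (axis j 1))"
  proof (rule smooth_on_sum[OF assms(1) finite])
    fix j
    have "smooth_on S (\<lambda>u. V u $ j)"
      by (rule smooth_on_linear[OF assms(1) bounded_linear_vec_nth assms(2)])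
    then show "smooth_on S (\<lambda>u. V u $ j *\<^sub>R frechet_derivative f (at u) (axis j 1))"
      by (rule smooth_on_bilinear[OF assms(1) bounded_bilinear_scaleR _
          smooth_on_partial_derivative[OF assms(3)]])
  qed
  show "(\<Sum>j\<in>UNIV. V u $ j *\<^sub>R frechet_derivative f (at u) (axis j 1)) = vfd V f u"
    if "u \<in> S" for u
  proof -
    have "linear (frechet_derivative f (at u))"
      by (rule linear_frechet_derivative[OF smooth_on_differentiable[OF assms(1,3) that]])
    then show ?thesis
      unfolding vfd_def by (rule linear_expand_axis[symmetric])
  qed
qed

lemma fst_nablaE'_eq_vfd:
  assumes "open U" "u \<in> U" "\<And>v. v \<in> U \<Longrightarrow> fst (\<sigma> v) = B v" "B differentiable at u"
  shows "fst (nablaE' X Y \<sigma> u) = vfd Y B u"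
proof -
  have "vfd Y (\<lambda>v. fst (\<sigma> v) $ i) u = vfd Y B u $ i" for i
  proof -
    have "((\<lambda>v. B v $ i) has_derivative (\<lambda>h. frechet_derivative B (at u) h $ i)) (at u)"
      using assms(4) bounded_linear.has_derivative[OF bounded_linear_vec_nth]
      by (simp add: frechet_derivative_works)
    then have d: "((\<lambda>v. fst (\<sigma> v) $ i) has_derivative
        (\<lambda>h. frechet_derivative B (at u) h $ i)) (at u)"
      by (rule has_derivative_transform_within_open[OF _ assms(1,2)]) (simp add: assms(3))
    show ?thesis
      by (simp add: vfd_def frechet_derivative_at[OF d, symmetric])
  qed
  then show ?thesis
    unfolding nablaE'_def frameE'_def
    by (simp add: fst_sum vec_eq_iff axis_def if_distrib cong: if_cong)
qed

lemma vf2_eq_vfd: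
  fixes A :: "'a::real_normed_vector \<Rightarrow> real" and X B :: "'a \<Rightarrow> 'b::real_inner"
  assumes "open U" "q \<in> U" "A differentiable at q" "B differentiable at q"
    and "\<And>q'. q' \<in> U \<Longrightarrow> F (p, q') = c + A q' - X p \<bullet> B q'"
  shows "vf2 Y F (p, q) = vfd Y A q - X p \<bullet> vfd Y B q"
proof -
  have "((\<lambda>q'. c + A q' - X p \<bullet> B q') has_derivative
      (\<lambda>h. 0 + frechet_derivative A (at q) h - X p \<bullet> frechet_derivative B (at q) h)) (at q)"
    using assms(3,4)
    by (intro has_derivative_diff has_derivative_add has_derivative_const
        has_derivative_inner_right)
      (simp_all add: frechet_derivative_works)
  then have d: "((\<lambda>q'. F (p, q')) has_derivative
      (\<lambda>h. 0 + frechet_derivative A (at q) h - X p \<bullet> frechet_derivative B (at q) h)) (at q)"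
    by (rule has_derivative_transform_within_open[OF _ assms(1,2)]) (simp add: assms(5))
  show ?thesis
    by (simp add: vf2_def vfd_def frechet_derivative_at[OF d, symmetric])
qed

lemma tau_Phi_eq_vf1:
  fixes X :: "real^'n \<Rightarrow> real^'n"
  assumes "X differentiable at r" "\<And>p. F (p, r) = c - X p \<bullet> fst s"
  shows "tau (Phi X Zc Z r, 0) (0, s) = -(1/2) * vf1 Z F (r, r)"
proof -
  have d: "((\<lambda>p. c - X p \<bullet> fst s) has_derivative
      (\<lambda>h. 0 - frechet_derivative X (at r) h \<bullet> fst s)) (at r)"
    using assms(1)
    by (intro has_derivative_diff has_derivative_const has_derivative_inner_left)
      (simp add: frechet_derivative_works)
  have "vf1 Z F (r, r) = - (vfd Z X r \<bullet> fst s)"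
    by (simp add: vf1_def vfd_def assms(2) frechet_derivative_at[OF d, symmetric])
  then show ?thesis
    by (simp add: tau_def Phi_def inner_vec_def)
qed

theorem theorem4p2:
  fixes U :: "(real^'n) set"
    and X P :: "real^'n \<Rightarrow> real^'n" and Zc :: "real^'n \<Rightarrow> real"
    and VX VY VZ VW :: "real^'n \<Rightarrow> real^'n"
    and r :: "real^'n"
  assumes "legendre_param U X P Zc"
    and "smooth_on U VX" and "smooth_on U VY" and "smooth_on U VZ" and "smooth_on U VW"
    and "r \<in> U"
  shows "tau (Phi X Zc VZ r, 0) (0, nablaE' X VY (Phi' X P Zc VW) r)
           = -(1/2) * vf1 VZ (vf2 VY (vf2 VW (Dcan X P Zc))) (r, r)
         \<and> tau (Phi X Zc VZ r, 0) (0, nablaE' X VX (nablaE' X VY (Phi' X P Zc VW)) r)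
           = -(1/2) * vf1 VZ (vf2 VX (vf2 VY (vf2 VW (Dcan X P Zc)))) (r, r)"
proof -
  from assms(1) have U: "open U" and X: "smooth_on U X" and P: "smooth_on U P"
    and Zc: "smooth_on U Zc"
    unfolding legendre_param_def by auto
  let ?G = "zdual X P Zc"
  have G: "smooth_on U ?G"
    unfolding zdual_def[abs_def] using U X P Zc bounded_bilinear_inner
    by (intro smooth_on_diff smooth_on_bilinear[where prod = inner]) auto
  note smooth_vfd = smooth_on_vfd[OF U]
  note differentiable = smooth_on_differentiable[OF U]
  have D1: "vf2 VW (Dcan X P Zc) (p, q) = vfd VW ?G q - X p \<bullet> vfd VW P q" if "q \<in> U" for p q
    by (rule vf2_eq_vfd[OF U, where c = "Zc p"])
      (use that G P in \<open>auto simp: Dcan_def differentiable\<close>)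
  have D2: "vf2 VY (vf2 VW (Dcan X P Zc)) (p, q)
      = vfd VY (vfd VW ?G) q - X p \<bullet> vfd VY (vfd VW P) q" if "q \<in> U" for p q
    by (rule vf2_eq_vfd[OF U, where c = 0])
      (use that G P assms(5) in \<open>auto simp: D1 differentiable smooth_vfd\<close>)
  have D3: "vf2 VX (vf2 VY (vf2 VW (Dcan X P Zc))) (p, q)
      = vfd VX (vfd VY (vfd VW ?G)) q - X p \<bullet> vfd VX (vfd VY (vfd VW P)) q" if "q \<in> U" for p q
    by (rule vf2_eq_vfd[OF U, where c = 0])
      (use that G P assms(3,5) in \<open>auto simp: D2 differentiable smooth_vfd\<close>)
  have N1: "fst (nablaE' X VY (Phi' X P Zc VW) u) = vfd VY (vfd VW P) u" if "u \<in> U" for u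
    by (rule fst_nablaE'_eq_vfd[OF U])
      (use that P assms(5) in \<open>auto simp: Phi'_def differentiable smooth_vfd\<close>)
  have N2: "fst (nablaE' X VX (nablaE' X VY (Phi' X P Zc VW)) r) = vfd VX (vfd VY (vfd VW P)) r"
    by (rule fst_nablaE'_eq_vfd[OF U])
      (use assms(3,5,6) P in \<open>auto simp: N1 differentiable smooth_vfd\<close>)
  show ?thesis
    using assms(6) X by (intro conjI tau_Phi_eq_vf1) (auto simp: D2 D3 N1 N2 differentiable)
qed

end
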